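(* For every positive integer $R$ prime to $p$, \[ D_R-S_R=\Delta_R^{(p)}\big(I-(S_R+I)A_R\big)+(\Theta_R-I)^{(p)}S_RA_R+S_R(A_R-I). \]
   Context: Let $p$ be a prime and $K$ a complete discrete valuation field of characteristic $p$ with algebraically closed residue field $k$, normalized valuation $v_K$. Fix $t\in K$ with $v_K(t)=-1$; every $x\in K$ is uniquely $\sum_{l\ge v_K(x)}x_lt^{-l}$ with $x_l\in k$, and $\mathrm{coef}_{K,l}(x)=x_l$. $UT_n(F)$ (resp. $NT_n(F)$) denotes upper triangular $n\times n$ matrices over $F$ with diagonal entries $1$ (resp. $0$); $X^{(p^m)}$ raises every entry of $X$ to the $p^m$-th power. For $X=(x_{i,j})\in UT_n(K)$ put $v_K(X)=\min_{i<j}v_K(x_{i,j})/(j-i)$. Let $n\ge2$ and $L/K$ a totally wildly ramified finite Galois extension with $\mathrm{Gal}(L/K)\cong UT_n(\mathbb F_p)$. Fix $A=(a_{i,j})\in UT_n(K)$ with $\mathrm{coef}_{K,l}(a_{i,j})=0$ for all $i<j$ and $l\in p\mathbb Z\cup\mathbb Z_{\ge0}$, such that $X^{(p)}A=X$ has a solution $\Theta\in UT_n(L)$ whose entries generate $L$ over $K$; fix such $\Theta$. Put $m_A=-v_K(A)$, fix an integer $N>\log_p\big(n(p^{n(n-1)/2}+1)m_A+p\big)+\frac{n(n-1)}2$ and $q=p^N$. For a positive integer $R$ prime to $p$ let $K_R=K(T)$ with $T^q+T^{q-1}=t^R$. Let $t_R\in\overline K$ be the $qR$-th root of $t^R(1+T^{-1})^{-1}$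 congruent to $t^{1/q}$ modulo $t^{1/q}\mathfrak m_{\overline K}$ (so $t_R\in K_R$). Let $\iota_R:K\to K_R$ be the ring isomorphism $\sum_lx_lt^{-l}\mapsto\sum_lx_l^{1/q}t_R^{-l}$, extended to an isomorphism $K_{sep}\to K_{R,sep}=K_{sep}$ and applied entrywise to matrices; $P(x)=x^p-x$ entrywise. Put $A_R=\iota_R(A)$, $\Theta_R=\iota_R(\Theta)$, $W_{R,0}=I$, $W_{R,e}=A_R^{(p^{e-1})}W_{R,e-1}$ ($1\le e\le N$), $\Delta_R=\Theta_R-\Theta W_{R,N}$, $D_R=P(\Delta_R)$, and $S_R=(W_{R,N}^{(p)})^{-1}AW_{R,N-1}^{(p)}-I\in NT_n(K_R)$. *)

theory Defs
  imports Complex_Main "HOL-Computational_Algebra.Polynomial" "Jordan_Normal_Form.Matrix"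
begin

section \<open>Fields and valuations inside an ambient field (playing the role of an algebraic closure)\<close>

definition is_subfield :: "'a::field set \<Rightarrow> bool" where
  "is_subfield F \<longleftrightarrow> 0 \<in> F \<and> 1 \<in> F \<and>
     (\<forall>x\<in>F. \<forall>y\<in>F. x + y \<in> F \<and> x - y \<in> F \<and> x * y \<in> F) \<and>
     (\<forall>x\<in>F. x \<noteq> 0 \<longrightarrow> inverse x \<in> F)"

definition gen_field :: "'a::field set \<Rightarrow> 'a set" where
  "gen_field S = \<Inter>{F. is_subfield F \<and> S \<subseteq> F}"

definition alg_closed_field :: "'a::field itself \<Rightarrow> bool" where
  "alg_closed_field _ \<longleftrightarrow> (\<forall>f::'a poly. degree f \<ge> 1 \<longrightarrow> (\<exists>x. poly f x = 0))"

definition alg_closed_subfield :: "'a::field set \<Rightarrow> bool" where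
  "alg_closed_subfield F \<longleftrightarrow> is_subfield F \<and>
     (\<forall>f::'a poly. (\<forall>i. coeff f i \<in> F) \<longrightarrow> degree f \<ge> 1 \<longrightarrow> (\<exists>x\<in>F. poly f x = 0))"

definition algebraic_over :: "'a::field set \<Rightarrow> 'a \<Rightarrow> bool" where
  "algebraic_over F x \<longleftrightarrow> (\<exists>f::'a poly. f \<noteq> 0 \<and> (\<forall>i. coeff f i \<in> F) \<and> poly f x = 0)"

definition separable_over :: "'a::field set \<Rightarrow> 'a \<Rightarrow> bool" where
  "separable_over F x \<longleftrightarrow> (\<exists>f::'a poly. f \<noteq> 0 \<and> (\<forall>i. coeff f i \<in> F) \<and> coprime f (pderiv f)
      \<and> poly f x = 0)"

definition sep_closure :: "'a::field set \<Rightarrow> 'a set" where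
  "sep_closure F = {x. separable_over F x}"

text \<open>A (rank one, rational valued) valuation on the ambient field; the value at 0 is irrelevant.\<close>
definition is_valuation :: "('a::field \<Rightarrow> rat) \<Rightarrow> bool" where
  "is_valuation w \<longleftrightarrow>
     (\<forall>x y. x \<noteq> 0 \<longrightarrow> y \<noteq> 0 \<longrightarrow> w (x * y) = w x + w y) \<and>
     (\<forall>x y. x \<noteq> 0 \<longrightarrow> y \<noteq> 0 \<longrightarrow> x + y \<noteq> 0 \<longrightarrow> w (x + y) \<ge> min (w x) (w y))"

text \<open>``valuation of z is at least r'' with the convention w(0) = infinity.\<close>
definition val_ge :: "('a::field \<Rightarrow> rat) \<Rightarrow> 'a \<Rightarrow> rat \<Rightarrow> bool" where
  "val_ge w z r \<longleftrightarrow> z = 0 \<or> w z \<ge> r"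

definition val_gt :: "('a::field \<Rightarrow> rat) \<Rightarrow> 'a \<Rightarrow> rat \<Rightarrow> bool" where
  "val_gt w z r \<longleftrightarrow> z = 0 \<or> w z > r"

definition complete_wrt :: "('a::field \<Rightarrow> rat) \<Rightarrow> 'a set \<Rightarrow> bool" where
  "complete_wrt w K \<longleftrightarrow> (\<forall>s::nat \<Rightarrow> 'a. (\<forall>m. s m \<in> K) \<longrightarrow>
      (\<forall>M::rat. \<exists>N. \<forall>i\<ge>N. \<forall>j\<ge>N. val_ge w (s i - s j) M) \<longrightarrow>
      (\<exists>x\<in>K. \<forall>M::rat. \<exists>N. \<forall>i\<ge>N. val_ge w (s i - x) M))"

definition Gal :: "'a::field set \<Rightarrow> 'a set \<Rightarrow> ('a \<Rightarrow> 'a) set" where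
  "Gal L K = {\<sigma>. bij_betw \<sigma> L L \<and> (\<forall>x\<in>L. \<forall>y\<in>L. \<sigma> (x + y) = \<sigma> x + \<sigma> y \<and> \<sigma> (x * y) = \<sigma> x * \<sigma> y)
                 \<and> (\<forall>x\<in>K. \<sigma> x = x) \<and> (\<forall>x. x \<notin> L \<longrightarrow> \<sigma> x = x)}"

definition finite_galois :: "'a::field set \<Rightarrow> 'a set \<Rightarrow> bool" where
  "finite_galois L K \<longleftrightarrow> is_subfield K \<and> is_subfield L \<and> K \<subseteq> L \<and> L \<subseteq> sep_closure K \<and> finite (Gal L K) \<and>
     {x\<in>L. \<forall>\<sigma>\<in>Gal L K. \<sigma> x = x} = K"

definition UT :: "nat \<Rightarrow> 'a::field set \<Rightarrow> 'a mat set" where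
  "UT n F = {X \<in> carrier_mat n n. (\<forall>i<n. X $$ (i,i) = 1) \<and> (\<forall>i<n. \<forall>j<i. X $$ (i,j) = 0)
                 \<and> (\<forall>i<n. \<forall>j<n. X $$ (i,j) \<in> F)}"

text \<open>UT_n(F_p), realised by integer matrices with entries in {0..<p}, multiplication mod p.\<close>
definition UTp :: "nat \<Rightarrow> nat \<Rightarrow> int mat set" where
  "UTp n p = {X \<in> carrier_mat n n. (\<forall>i<n. X $$ (i,i) = 1) \<and> (\<forall>i<n. \<forall>j<i. X $$ (i,j) = 0)
                 \<and> (\<forall>i<n. \<forall>j<n. X $$ (i,j) \<in> {0..<int p})}"

definition mult_mod :: "nat \<Rightarrow> int mat \<Rightarrow> int mat \<Rightarrow> int mat" where
  "mult_mod p X Y = map_mat (\<lambda>x. x mod int p) (X * Y)"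

definition frob_mat :: "nat \<Rightarrow> 'a::field mat \<Rightarrow> 'a mat" where
  "frob_mat e X = map_mat (\<lambda>x. x ^ e) X"

definition Pmat :: "nat \<Rightarrow> 'a::field mat \<Rightarrow> 'a mat" where
  "Pmat p X = map_mat (\<lambda>x. x ^ p - x) X"

definition inv_mat :: "nat \<Rightarrow> 'a::field mat \<Rightarrow> 'a mat" where
  "inv_mat n X = (THE Y. Y \<in> carrier_mat n n \<and> X * Y = 1\<^sub>m n \<and> Y * X = 1\<^sub>m n)"

definition val_mat :: "('a::field \<Rightarrow> rat) \<Rightarrow> nat \<Rightarrow> 'a mat \<Rightarrow> rat" where
  "val_mat w n X = Min {w (X $$ (i,j)) / of_nat (j - i) | i j. i < j \<and> j < n \<and> X $$ (i,j) \<noteq> 0}"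

fun Wmat :: "nat \<Rightarrow> nat \<Rightarrow> 'a::field mat \<Rightarrow> nat \<Rightarrow> 'a mat" where
  "Wmat n p AR 0 = 1\<^sub>m n"
| "Wmat n p AR (Suc e) = frob_mat (p ^ e) AR * Wmat n p AR e"

text \<open>q-th root (unique in characteristic p when q is a power of p, exists in an algebraically closed field).\<close>
definition root_q :: "nat \<Rightarrow> 'a::field \<Rightarrow> 'a" where
  "root_q q c = (THE y. y ^ q = c)"

end

theory Submission
  imports Defs "Jordan_Normal_Form.Determinant" "HOL-Number_Theory.Cong"
begin

text \<open>Write \<open>X\<^sup>\<phi>\<close> for the entrywise Frobenius \<open>X\<^sup>(\<^sup>p\<^sup>)\<close>. In characteristic \<open>p\<close> it is a
  ring endomorphism of matrices, so \<open>\<Delta>\<^sub>R\<^sup>\<phi> = \<Theta>\<^sub>R\<^sup>\<phi> - \<Theta>\<^sup>\<phi> W\<^sub>N\<^sup>\<phi>\<close>. Besides this, the identity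
  only uses \<open>\<Theta>\<^sup>\<phi> A = \<Theta>\<close>, its transport \<open>\<Theta>\<^sub>R\<^sup>\<phi> A\<^sub>R = \<Theta>\<^sub>R\<close> along the ring isomorphism
  \<open>\<iota>\<^sub>R\<close>, and \<open>W\<^sub>N = W\<^sub>N\<^sub>-\<^sub>1\<^sup>\<phi> A\<^sub>R\<close>: substituting \<open>S\<^sub>R + I = (W\<^sub>N\<^sup>\<phi>)\<^sup>-\<^sup>1 A W\<^sub>N\<^sub>-\<^sub>1\<^sup>\<phi>\<close>, both
  sides become \<open>\<Delta>\<^sub>R\<^sup>\<phi> - \<Delta>\<^sub>R - S\<^sub>R\<close> by noncommutative ring arithmetic.

  The recursion for \<open>W\<close> needs \<open>N \<ge> 1\<close>, which the choice of \<open>N\<close> guarantees as soon as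
  \<open>v\<^sub>K(A) \<le> 0\<close>. Here \<open>A \<noteq> I\<close>, since otherwise the entries of \<open>\<Theta>\<close> are roots of \<open>x\<^sup>p - x\<close>,
  hence lie in \<open>\<bbbF>\<^sub>p \<subseteq> K\<close>, and \<open>L = K\<close> contradicts \<open>p | [L:K]\<close>; and a nonzero entry of \<open>A\<close>,
  having \<open>t\<close>-expansion coefficients in negative degrees only, has negative valuation.\<close>

lemma frob_mat_carrier [simp]: "frob_mat e X \<in> carrier_mat nr nc \<longleftrightarrow> X \<in> carrier_mat nr nc"
  by (simp add: frob_mat_def)

lemma frob_mat_frob_mat: "frob_mat a (frob_mat b X) = frob_mat (b * a) X"
  by (auto simp: frob_mat_def power_mult)

lemma Pmat_eq_frob_mat_diff: "Pmat p X = frob_mat p X - X"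
  by (auto simp: Pmat_def frob_mat_def)

lemma Wmat_carrier: "AR \<in> carrier_mat n n \<Longrightarrow> Wmat n p AR e \<in> carrier_mat n n"
  by (induction e) (simp_all add: mult_carrier_mat[where n = n])

lemma UTD:
  assumes "A \<in> UT n F"
  shows "A \<in> carrier_mat n n" "upper_triangular A" "\<forall>i<n. A $$ (i, i) = 1"
  using assms by (auto simp: UT_def upper_triangular_def)

lemma det_UT:
  assumes "A \<in> UT n F"
  shows "det A = 1"
  using det_upper_triangular[OF UTD(2,1)[OF assms]] UTD(1,3)[OF assms]
  by (simp add: prod_list_diag_prod)

lemma frob_mat_UT: "A \<in> UT n F \<Longrightarrow> 0 < e \<Longrightarrow> frob_mat e A \<in> UT n UNIV"
  by (auto simp: UT_def frob_mat_def)

lemma det_Wmat: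
  fixes AR :: "'a::field mat"
  assumes "AR \<in> UT n F" "p > 0"
  shows "det (Wmat n p AR e) = 1"
proof (induction e)
  case (Suc e)
  have "det (frob_mat (p ^ e) AR) = 1"
    using assms by (intro det_UT[of _ n UNIV] frob_mat_UT) auto
  with Suc show ?case
    using UTD(1)[OF assms(1)] by (simp add: det_mult[of _ n] Wmat_carrier)
qed simp

lemma inv_mat_right_inverse:
  fixes X :: "'a::field mat"
  assumes X: "X \<in> carrier_mat n n" and "det X \<noteq> 0"
  shows "inv_mat n X \<in> carrier_mat n n" and "X * inv_mat n X = 1\<^sub>m n"
proof -
  obtain Y where Y: "Y \<in> carrier_mat n n" "X * Y = 1\<^sub>m n" "Y * X = 1\<^sub>m n"
    using det_non_zero_imp_unit[OF assms, of undefined] by (auto simp: Units_def ring_mat_simps)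
  have "inv_mat n X = Y"
    unfolding inv_mat_def
  proof (rule the_equality)
    fix Z assume Z: "Z \<in> carrier_mat n n \<and> X * Z = 1\<^sub>m n \<and> Z * X = 1\<^sub>m n"
    then have "Z = (Y * X) * Z" using Y left_mult_one_mat[of Z n n] by simp
    also have "\<dots> = Y * (X * Z)"
      using X Y Z by (meson assoc_mult_mat)
    also have "\<dots> = Y"
      using Y Z by simp
    finally show "Z = Y" .
  qed (use Y in auto)
  with Y show "inv_mat n X \<in> carrier_mat n n" "X * inv_mat n X = 1\<^sub>m n" by auto
qed

text \<open>\<open>\<Phi>\<^sub>R, \<Phi>, X, Y, W\<^sub>p\<close> stand for \<open>\<Theta>\<^sub>R\<^sup>\<phi>, \<Theta>\<^sup>\<phi>, W\<^sub>N\<^sup>\<phi>, (W\<^sub>N\<^sup>\<phi>)\<^sup>-\<^sup>1, W\<^sub>N\<^sub>-\<^sub>1\<^sup>\<phi>\<close>;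
  once the three relations are given, the Frobenius plays no further role.\<close>

lemma defect_identity:
  fixes \<Theta>R \<Theta> AR A X Y Wp WN \<Phi>R \<Phi> :: "'a::comm_ring_1 mat"
  assumes carrier: "\<Theta>R \<in> carrier_mat n n" "\<Theta> \<in> carrier_mat n n" "AR \<in> carrier_mat n n"
      "A \<in> carrier_mat n n" "X \<in> carrier_mat n n" "Y \<in> carrier_mat n n" "Wp \<in> carrier_mat n n"
      "WN \<in> carrier_mat n n" "\<Phi>R \<in> carrier_mat n n" "\<Phi> \<in> carrier_mat n n"
    and XY: "X * Y = 1\<^sub>m n"
    and \<Phi>R: "\<Phi>R * AR = \<Theta>R" and \<Phi>: "\<Phi> * A = \<Theta>" and Wp: "Wp * AR = WN"
  defines "\<Delta> \<equiv> \<Theta>R - \<Theta> * WN" and "S \<equiv> Y * A * Wp - 1\<^sub>m n" and "\<Phi>\<Delta> \<equiv> \<Phi>R - \<Phi> * X"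
  shows "(\<Phi>\<Delta> - \<Delta>) - S = \<Phi>\<Delta> * (1\<^sub>m n - (S + 1\<^sub>m n) * AR)
      + (\<Phi>R - 1\<^sub>m n) * S * AR + S * (AR - 1\<^sub>m n)"
proof -
  note [simp] = carrier mult_carrier_mat[where n = n and nr = n and nc = n]
    minus_carrier_mat[where nr = n and nc = n]
    assoc_mult_mat[where n\<^sub>1 = n and n\<^sub>2 = n and n\<^sub>3 = n and n\<^sub>4 = n]
    minus_mult_distrib_mat[where n = n and nr = n and nc = n]
    mult_minus_distrib_mat[where n = n and nr = n and nc = n]
    left_mult_one_mat[where nr = n and nc = n] right_mult_one_mat[where nr = n and nc = n]
  define M where "M = Y * A * Wp"
  have M: "M \<in> carrier_mat n n"
    by (simp add: M_def)
  note [simp] = M carrier_matD[OF M] carrier[THEN carrier_matD(1)] carrier[THEN carrier_matD(2)]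
  have S: "S = M - 1\<^sub>m n"
    unfolding S_def M_def ..
  have "X * (M * AR) = (X * Y) * (A * WN)"
    by (simp add: M_def flip: Wp)
  also have "\<dots> = A * WN" by (simp add: XY Wp)
  finally have "\<Phi> * (X * (M * AR)) = \<Theta> * WN"
    by (simp flip: \<Phi>)
  then have \<Phi>\<Delta>_MA: "\<Phi>\<Delta> * (M * AR) = \<Phi>R * (M * AR) - \<Theta> * WN"
    by (simp add: \<Phi>\<Delta>_def)
  have "S + 1\<^sub>m n = M"
    unfolding S by (rule eq_matI) auto
  then have rhs1: "\<Phi>\<Delta> * (1\<^sub>m n - (S + 1\<^sub>m n) * AR) = \<Phi>\<Delta> - \<Phi>\<Delta> * (M * AR)"
    by (simp add: \<Phi>\<Delta>_def)
  have rhs2: "(\<Phi>R - 1\<^sub>m n) * S * AR = \<Phi>R * (M * AR) - \<Theta>R - (M * AR - AR)"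
    by (simp add: S \<Phi>R, rule eq_matI, auto)
  have rhs3: "S * (AR - 1\<^sub>m n) = (M * AR - M) - (AR - 1\<^sub>m n)"
    by (simp add: S, rule eq_matI, auto)
  show ?thesis
    unfolding rhs1 rhs2 rhs3 \<Phi>\<Delta>_MA unfolding S \<Delta>_def
    by (rule eq_matI) (auto simp: \<Phi>\<Delta>_def)
qed

context
  fixes p :: nat
  assumes prime_p: "prime p" and char_p: "CHAR('a::field) = p"
begin

lemma power_char_add: "((x::'a) + y) ^ p = x ^ p + y ^ p"
  using freshmans_dream[of p x y] prime_p char_p by blast

lemma power_char_diff: "((x::'a) - y) ^ p = x ^ p - y ^ p"
  using power_char_add[of "x - y" y] by (simp add: eq_diff_eq)

lemma power_char_sum: "(\<Sum>i\<in>S. f i :: 'a) ^ p = (\<Sum>i\<in>S. f i ^ p)"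
  using freshmans_dream_sum[of p f S] prime_p char_p by blast

lemma of_nat_power_char: "(of_nat i :: 'a) ^ p = of_nat i"
  by (induction i) (use prime_p in \<open>simp_all add: power_char_add prime_gt_0_nat\<close>)

lemma power_char_eq_self_imp_of_nat:
  assumes "(x::'a) ^ p = x"
  shows "x \<in> of_nat ` {..<p}"
proof -
  have p2: "p \<ge> 2" using prime_p by (simp add: prime_ge_2_nat)
  define f :: "'a poly" where "f = monom 1 p + [:0, -1:]"
  have deg: "degree f = p"
    unfolding f_def using p2 by (subst degree_add_eq_left) (auto simp: degree_monom_eq)
  then have "f \<noteq> 0" using p2 by auto
  have roots: "{y. poly f y = 0} = {y. y ^ p = y}"
    by (simp add: f_def poly_monom)
  have "inj_on (of_nat :: nat \<Rightarrow> 'a) {..<p}"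
    by (rule inj_onI)
      (metis char_p of_nat_eq_iff_cong_CHAR cong_less_modulus_unique_nat lessThan_iff)
  then have "card (of_nat ` {..<p} :: 'a set) = p"
    by (simp add: card_image)
  moreover have "of_nat ` {..<p} \<subseteq> {y :: 'a. y ^ p = y}"
    using of_nat_power_char by auto
  moreover have "card {y :: 'a. y ^ p = y} \<le> p"
    using card_poly_roots_bound[OF \<open>f \<noteq> 0\<close>] deg roots by simp
  moreover have "finite {y :: 'a. y ^ p = y}"
    using poly_roots_finite[OF \<open>f \<noteq> 0\<close>] roots by simp
  ultimately have "of_nat ` {..<p} = {y :: 'a. y ^ p = y}"
    by (metis card_seteq)
  then show ?thesis using assms by blast
qed

lemma frob_mat_one: "frob_mat p (1\<^sub>m n :: 'a mat) = 1\<^sub>m n"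
  using prime_p by (auto simp: frob_mat_def prime_gt_0_nat)

lemma frob_mat_diff:
  "A \<in> carrier_mat nr nc \<Longrightarrow> B \<in> carrier_mat nr nc \<Longrightarrow>
    frob_mat p (A - B :: 'a mat) = frob_mat p A - frob_mat p B"
  by (rule eq_matI) (auto simp: frob_mat_def power_char_diff)

lemma frob_mat_mult:
  "A \<in> carrier_mat nr m \<Longrightarrow> B \<in> carrier_mat m nc \<Longrightarrow>
    frob_mat p (A * B :: 'a mat) = frob_mat p A * frob_mat p B"
  by (rule eq_matI) (auto simp: frob_mat_def scalar_prod_def power_char_sum power_mult_distrib)

lemma frob_mat_Wmat:
  fixes AR :: "'a mat"
  assumes AR: "AR \<in> carrier_mat n n"
  shows "frob_mat p (Wmat n p AR e) * AR = Wmat n p AR (Suc e)"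
proof (induction e)
  case 0
  have "frob_mat 1 AR = AR"
    by (auto simp: frob_mat_def)
  then show ?case
    using AR by (simp add: frob_mat_one)
next
  case (Suc e)
  have "frob_mat p (Wmat n p AR (Suc e)) * AR
      = frob_mat (p ^ Suc e) AR * (frob_mat p (Wmat n p AR e) * AR)"
    using AR Wmat_carrier[OF AR]
    by (simp add: frob_mat_mult[of _ n n _ n] frob_mat_frob_mat mult.commute
        assoc_mult_mat[where n\<^sub>1 = n and n\<^sub>2 = n and n\<^sub>3 = n and n\<^sub>4 = n])
  with Suc show ?case by simp
qed

lemma det_frob_mat_Wmat:
  fixes AR :: "'a mat"
  assumes "AR \<in> UT n F"
  shows "det (frob_mat p (Wmat n p AR e)) = 1"
proof -
  have "p > 0"
    using prime_p prime_gt_0_nat by blast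
  have "det (frob_mat p (Wmat n p AR e) * AR) = 1"
    unfolding frob_mat_Wmat[OF UTD(1)[OF assms]] by (rule det_Wmat[OF assms \<open>p > 0\<close>])
  then show ?thesis
    using UTD(1)[OF assms] Wmat_carrier[OF UTD(1)[OF assms]] det_UT[OF assms]
    by (simp add: det_mult[of _ n])
qed

lemma frobenius_defect_identity:
  fixes \<Theta>R \<Theta> AR A W' W :: "'a mat"
  assumes carrier: "\<Theta>R \<in> carrier_mat n n" "\<Theta> \<in> carrier_mat n n" "AR \<in> carrier_mat n n"
      "A \<in> carrier_mat n n" "W' \<in> carrier_mat n n" "W \<in> carrier_mat n n"
    and invertible: "det (frob_mat p W) \<noteq> 0"
    and \<Theta>R_eq: "frob_mat p \<Theta>R * AR = \<Theta>R" and \<Theta>_eq: "frob_mat p \<Theta> * A = \<Theta>"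
    and W_eq: "frob_mat p W' * AR = W"
  defines "\<Delta> \<equiv> \<Theta>R - \<Theta> * W"
    and "S \<equiv> inv_mat n (frob_mat p W) * A * frob_mat p W' - 1\<^sub>m n"
  shows "Pmat p \<Delta> - S = frob_mat p \<Delta> * (1\<^sub>m n - (S + 1\<^sub>m n) * AR)
      + frob_mat p (\<Theta>R - 1\<^sub>m n) * S * AR + S * (AR - 1\<^sub>m n)"
proof -
  note inverse = inv_mat_right_inverse[OF frob_mat_carrier[THEN iffD2, OF carrier(6)] invertible]
  have frob_\<Delta>: "frob_mat p \<Delta> = frob_mat p \<Theta>R - frob_mat p \<Theta> * frob_mat p W"
    unfolding \<Delta>_def using carrier by (simp add: frob_mat_diff[of _ n n] frob_mat_mult[of _ n n _ n])
  have frob_\<Theta>R_1: "frob_mat p (\<Theta>R - 1\<^sub>m n) = frob_mat p \<Theta>R - 1\<^sub>m n"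
    using carrier by (simp add: frob_mat_diff[of _ n n] frob_mat_one)
  show ?thesis
    unfolding Pmat_eq_frob_mat_diff frob_\<Theta>R_1 unfolding frob_\<Delta> unfolding S_def \<Delta>_def
    using defect_identity[OF carrier(1-4) _ inverse(1) _ carrier(6) _ _ inverse(2) \<Theta>R_eq \<Theta>_eq W_eq]
      carrier by simp
qed

end

lemma elements_mat_subsetD:
  "elements_mat X \<subseteq> F \<Longrightarrow> i < dim_row X \<Longrightarrow> j < dim_col X \<Longrightarrow> X $$ (i, j) \<in> F"
  using elements_matI[of X "dim_row X" "dim_col X" i j] by auto

lemma subfield_closed:
  assumes "is_subfield F"
  shows "0 \<in> F" "1 \<in> F" "x \<in> F \<Longrightarrow> y \<in> F \<Longrightarrow> x + y \<in> F"
    "x \<in> F \<Longrightarrow> y \<in> F \<Longrightarrow> x * y \<in> F"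
  using assms by (auto simp: is_subfield_def)

lemma subfield_sum: "is_subfield F \<Longrightarrow> (\<And>i. i \<in> S \<Longrightarrow> f i \<in> F) \<Longrightarrow> sum f S \<in> F"
  by (induction S rule: infinite_finite_induct) (auto intro: subfield_closed)

lemma subfield_power: "is_subfield F \<Longrightarrow> x \<in> F \<Longrightarrow> x ^ k \<in> F"
  by (induction k) (auto intro: subfield_closed)

lemma of_nat_in_subfield: "is_subfield F \<Longrightarrow> (of_nat i :: 'a::field) \<in> F"
  by (induction i) (auto intro: subfield_closed)

context
  fixes F :: "'a::field set" and \<iota> :: "'a \<Rightarrow> 'a"
  assumes subfield: "is_subfield F"
    and hom: "\<forall>x\<in>F. \<forall>y\<in>F. \<iota> (x + y) = \<iota> x + \<iota> y \<and> \<iota> (x * y) = \<iota> x * \<iota> y"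
    and hom_one: "\<iota> 1 = 1"
begin

lemma subfield_hom_zero: "\<iota> 0 = 0"
proof -
  have "\<iota> 0 + \<iota> 0 = \<iota> 0 + 0"
    using hom subfield_closed(1)[OF subfield] by (metis add_0_right)
  then show ?thesis by (rule add_left_imp_eq)
qed

lemma subfield_hom_sum: "(\<And>i. i \<in> S \<Longrightarrow> f i \<in> F) \<Longrightarrow> \<iota> (sum f S) = (\<Sum>i\<in>S. \<iota> (f i))"
  by (induction S rule: infinite_finite_induct) (auto simp: subfield_hom_zero hom subfield_sum[OF subfield])

lemma subfield_hom_power: "x \<in> F \<Longrightarrow> \<iota> (x ^ k) = \<iota> x ^ k"
  by (induction k) (auto simp: hom_one hom subfield_power[OF subfield])

lemma map_mat_mult_subfield_hom:
  assumes "elements_mat X \<subseteq> F" "elements_mat Y \<subseteq> F" "dim_col X = dim_row Y"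
  shows "map_mat \<iota> (X * Y) = map_mat \<iota> X * map_mat \<iota> Y"
proof (rule eq_matI)
  fix i j assume "i < dim_row (map_mat \<iota> X * map_mat \<iota> Y)" "j < dim_col (map_mat \<iota> X * map_mat \<iota> Y)"
  then have entries: "X $$ (i, k) \<in> F" "Y $$ (k, j) \<in> F" if "k < dim_row Y" for k
    using assms that by (auto intro: elements_mat_subsetD)
  have "\<iota> (\<Sum>k = 0..<dim_row Y. X $$ (i, k) * Y $$ (k, j))
      = (\<Sum>k = 0..<dim_row Y. \<iota> (X $$ (i, k) * Y $$ (k, j)))"
    by (rule subfield_hom_sum) (use entries subfield_closed[OF subfield] in auto)
  also have "\<dots> = (\<Sum>k = 0..<dim_row Y. \<iota> (X $$ (i, k)) * \<iota> (Y $$ (k, j)))"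
    by (rule sum.cong) (use entries hom in auto)
  finally show "map_mat \<iota> (X * Y) $$ (i, j) = (map_mat \<iota> X * map_mat \<iota> Y) $$ (i, j)"
    using assms(3) \<open>i < _\<close> \<open>j < _\<close> by (simp add: scalar_prod_def)
qed auto

lemma map_mat_frob_mat_subfield_hom:
  "elements_mat X \<subseteq> F \<Longrightarrow> map_mat \<iota> (frob_mat e X) = frob_mat e (map_mat \<iota> X)"
  by (auto simp: frob_mat_def subfield_hom_power elements_mat_subsetD)

lemma map_mat_UT: "A \<in> UT n F \<Longrightarrow> map_mat \<iota> A \<in> UT n UNIV"
  by (auto simp: UT_def subfield_hom_zero hom_one)

lemma map_mat_frobenius_equation:
  assumes "frob_mat p \<Theta> * A = \<Theta>" "elements_mat \<Theta> \<subseteq> F" "elements_mat A \<subseteq> F"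
    and "dim_col \<Theta> = dim_row A"
  shows "frob_mat p (map_mat \<iota> \<Theta>) * map_mat \<iota> A = map_mat \<iota> \<Theta>"
proof -
  have "elements_mat (frob_mat p \<Theta>) \<subseteq> F"
    using assms(2) by (auto simp: frob_mat_def subfield_power[OF subfield])
  then have "map_mat \<iota> \<Theta> = map_mat \<iota> (frob_mat p \<Theta>) * map_mat \<iota> A"
    using assms map_mat_mult_subfield_hom[of "frob_mat p \<Theta>" A] by (simp add: frob_mat_def)
  also have "map_mat \<iota> (frob_mat p \<Theta>) = frob_mat p (map_mat \<iota> \<Theta>)"
    using assms(2) by (rule map_mat_frob_mat_subfield_hom)
  finally show ?thesis by (rule sym)
qed

end

context
  fixes w :: "'a::field \<Rightarrow> rat"
  assumes valuation: "is_valuation w"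
begin

lemma valuation_mult: "x \<noteq> 0 \<Longrightarrow> y \<noteq> 0 \<Longrightarrow> w (x * y) = w x + w y"
  using valuation by (simp add: is_valuation_def)

lemma valuation_add: "x \<noteq> 0 \<Longrightarrow> y \<noteq> 0 \<Longrightarrow> x + y \<noteq> 0 \<Longrightarrow> min (w x) (w y) \<le> w (x + y)"
  using valuation by (simp add: is_valuation_def)

lemma valuation_one: "w 1 = 0"
  using valuation_mult[of 1 1] by simp

lemma valuation_uminus: "w (- x) = w x"
proof (cases "x = 0")
  case False
  have "w (-1) = 0"
    using valuation_mult[of "-1" "-1"] valuation_one by simp
  then show ?thesis
    using valuation_mult[of "-1" x] False by simp
qed simp

lemma valuation_inverse: "x \<noteq> 0 \<Longrightarrow> w (inverse x) = - w x"
  using valuation_mult[of x "inverse x"] valuation_one by simp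

lemma valuation_power: "x \<noteq> 0 \<Longrightarrow> w (x ^ m) = of_nat m * w x"
  by (induction m) (auto simp: valuation_one valuation_mult algebra_simps)

lemma valuation_power_int: "x \<noteq> 0 \<Longrightarrow> w (x powi k) = of_int k * w x"
  by (cases "k \<ge> 0")
    (auto simp: power_int_def valuation_power valuation_inverse)

lemma valuation_eq_of_close:
  assumes "y \<noteq> 0" "w y < r" "val_ge w (x - y) r"
  shows "w x = w y"
proof (cases "x = y")
  case False
  then have close: "r \<le> w (x - y)"
    using assms(3) by (simp add: val_ge_def)
  have "x \<noteq> 0"
    using close assms(2) valuation_uminus[of y] by auto
  have "min (w y) (w (x - y)) \<le> w x"
    using valuation_add[of y "x - y"] \<open>x \<noteq> 0\<close> assms(1) False by simp
  moreover have "min (w x) (w (x - y)) \<le> w y"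
    using valuation_add[of x "- (x - y)"] \<open>x \<noteq> 0\<close> assms(1) False valuation_uminus[of "x - y"]
    by simp
  ultimately show ?thesis
    using close assms(2) by linarith
qed simp

lemma valuation_neg_of_polar_expansion:
  fixes coef :: "int \<Rightarrow> 'a \<Rightarrow> 'a"
  assumes t: "t \<noteq> 0" "w t = -1"
    and coef_units: "\<forall>l. coef l x \<noteq> 0 \<longrightarrow> w (coef l x) = 0"
    and coef_low: "\<forall>l<L0. coef l x = 0"
    and coef_exp: "\<forall>L0 M. (\<forall>l<L0. coef l x = 0) \<longrightarrow>
                     val_ge w (x - (\<Sum>l\<in>{L0..<M}. coef l x * t powi (-l))) (of_int M)"
    and polar: "\<forall>l\<ge>0. coef l x = 0" and "x \<noteq> 0"
  shows "w x < 0"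
proof -
  have "\<exists>l1. coef l1 x \<noteq> 0"
  proof (rule ccontr)
    assume "\<nexists>l1. coef l1 x \<noteq> 0"
    moreover have "val_ge w (x - (\<Sum>l\<in>{L0..<\<lfloor>w x\<rfloor> + 1}. coef l x * t powi (-l)))
        (of_int (\<lfloor>w x\<rfloor> + 1))"
      using coef_exp coef_low by blast
    ultimately have "of_int (\<lfloor>w x\<rfloor> + 1) \<le> w x"
      using \<open>x \<noteq> 0\<close> by (simp add: val_ge_def)
    then show False
      using floor_correct[of "w x"] by linarith
  qed
  then obtain l1 where l1: "coef l1 x \<noteq> 0" ..
  define Z where "Z = {l \<in> {L0..l1}. coef l x \<noteq> 0}"
  define l0 where "l0 = Min Z"
  have "finite Z"
    unfolding Z_def by (rule finite_subset[OF _ finite_atLeastAtMost_int]) auto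
  moreover have "l1 \<in> Z"
    using l1 coef_low by (auto simp: Z_def not_less[symmetric])
  ultimately have "l0 \<in> Z" and l0_le: "\<And>l. l \<in> Z \<Longrightarrow> l0 \<le> l"
    unfolding l0_def by (auto intro: Min_in)
  then have lead: "coef l0 x \<noteq> 0" "l0 \<le> l1"
    by (auto simp: Z_def)
  have below: "\<forall>l<l0. coef l x = 0"
  proof (intro allI impI)
    fix l assume "l < l0"
    show "coef l x = 0"
    proof (cases "l < L0")
      case False
      with \<open>l < l0\<close> lead(2) l0_le[of l] show ?thesis
        by (force simp: Z_def)
    qed (use coef_low in auto)
  qed
  define y where "y = coef l0 x * t powi (-l0)"
  have "y \<noteq> 0" "w y = of_int l0"
    using lead(1) coef_units t by (simp_all add: y_def valuation_mult valuation_power_int)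
  moreover have "val_ge w (x - y) (of_int l0 + 1)"
  proof -
    have "val_ge w (x - (\<Sum>l\<in>{l0..<l0 + 1}. coef l x * t powi (-l))) (of_int (l0 + 1))"
      using coef_exp below by blast
    moreover have "{l0..<l0 + 1} = {l0}"
      by auto
    ultimately show ?thesis
      by (simp add: y_def)
  qed
  ultimately have "w x = of_int l0"
    using valuation_eq_of_close[of y "of_int l0 + 1" x] by simp
  moreover have "l0 < 0"
    using polar lead(1) by (meson not_le)
  ultimately show ?thesis by simp
qed

end

lemma val_mat_nonpos:
  assumes "i < j" "j < n" "X $$ (i, j) \<noteq> 0" "w (X $$ (i, j)) \<le> 0"
  shows "val_mat w n X \<le> 0"
proof -
  let ?V = "{w (X $$ (i, j)) / of_nat (j - i) | i j. i < j \<and> j < n \<and> X $$ (i, j) \<noteq> 0}"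
  have "?V \<subseteq> (\<lambda>(i, j). w (X $$ (i, j)) / of_nat (j - i)) ` ({..<n} \<times> {..<n})"
    by auto
  then have "finite ?V"
    by (rule finite_subset) auto
  moreover have "w (X $$ (i, j)) / of_nat (j - i) \<in> ?V"
    using assms by blast
  moreover have "w (X $$ (i, j)) / of_nat (j - i) \<le> 0"
    using assms by (simp add: divide_nonpos_pos)
  ultimately show ?thesis
    unfolding val_mat_def by (meson Min_le order_trans)
qed

lemma UT_offdiag_nonzero:
  assumes "A \<in> UT n F" "A \<noteq> 1\<^sub>m n"
  obtains i j where "i < j" "j < n" "A $$ (i, j) \<noteq> 0"
proof -
  have "\<exists>i j. i < j \<and> j < n \<and> A $$ (i, j) \<noteq> 0"
  proof (rule ccontr)
    assume "\<nexists>i j. i < j \<and> j < n \<and> A $$ (i, j) \<noteq> 0"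
    with assms(1) have "A = 1\<^sub>m n"
      by (intro eq_matI) (auto simp: UT_def, metis linorder_neqE_nat)
    with assms(2) show False ..
  qed
  then show ?thesis
    using that by blast
qed

lemma val_mat_nonpos_of_polar_entries:
  fixes coef :: "int \<Rightarrow> 'a::field \<Rightarrow> 'a" and A :: "'a mat"
  assumes valuation: "is_valuation w" and t: "t \<noteq> 0" "w t = -1"
    and coef_units: "\<forall>x\<in>K. \<forall>l. coef l x \<noteq> 0 \<longrightarrow> w (coef l x) = 0"
    and coef_low: "\<forall>x\<in>K. \<exists>L0. \<forall>l<L0. coef l x = 0"
    and coef_exp: "\<forall>x\<in>K. \<forall>L0 M. (\<forall>l<L0. coef l x = 0) \<longrightarrow>
                     val_ge w (x - (\<Sum>l\<in>{L0..<M}. coef l x * t powi (-l))) (of_int M)"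
    and A: "A \<in> UT n K" "A \<noteq> 1\<^sub>m n"
    and polar: "\<forall>i j l. i < j \<longrightarrow> j < n \<longrightarrow> l \<ge> 0 \<longrightarrow> coef l (A $$ (i, j)) = 0"
  shows "val_mat w n A \<le> 0"
proof -
  obtain i j where ij: "i < j" "j < n" "A $$ (i, j) \<noteq> 0"
    using UT_offdiag_nonzero[OF A] .
  have "A $$ (i, j) \<in> K"
    using A(1) ij by (auto simp: UT_def)
  moreover obtain L0 where "\<forall>l<L0. coef l (A $$ (i, j)) = 0"
    using coef_low \<open>A $$ (i, j) \<in> K\<close> by blast
  ultimately have "w (A $$ (i, j)) < 0"
    using coef_units coef_exp polar ij
    by (intro valuation_neg_of_polar_expansion[OF valuation t]) auto
  then show ?thesis
    using val_mat_nonpos[OF ij] by simp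
qed

lemma one_le_log_add_base: "1 < b \<Longrightarrow> 0 \<le> y \<Longrightarrow> 1 \<le> log b (y + b)"
  by (simp add: le_log_iff)

lemma Gal_self: "Gal K K = {id}"
proof -
  have "\<sigma> = id" if "\<sigma> \<in> Gal K K" for \<sigma>
    using that by (auto simp: Gal_def fun_eq_iff)
  moreover have "id \<in> Gal K K"
    by (simp add: Gal_def)
  ultimately show ?thesis by blast
qed

lemma gen_field_eq:
  assumes "is_subfield K" "S \<subseteq> K" shows "gen_field (K \<union> S) = K"
  using assms unfolding gen_field_def by blast

lemma nontrivial_extension_matrix_ne_one:
  fixes A \<Theta> :: "'a::field mat"
  assumes "prime p" "CHAR('a) = p" "is_subfield K"
    and "\<Theta> \<in> carrier_mat n n" "frob_mat p \<Theta> * A = \<Theta>"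
    and "L = gen_field (K \<union> {\<Theta> $$ (i, j) | i j. i < n \<and> j < n})"
    and "p dvd card (Gal L K)"
  shows "A \<noteq> 1\<^sub>m n"
proof
  assume "A = 1\<^sub>m n"
  then have "frob_mat p \<Theta> = \<Theta>"
    using assms(5) right_mult_one_mat[of "frob_mat p \<Theta>" n n] assms(4) by simp
  have "\<Theta> $$ (i, j) ^ p = \<Theta> $$ (i, j)" if "i < n" "j < n" for i j
  proof -
    have "\<Theta> $$ (i, j) ^ p = frob_mat p \<Theta> $$ (i, j)"
      using assms(4) that by (simp add: frob_mat_def)
    then show ?thesis
      using \<open>frob_mat p \<Theta> = \<Theta>\<close> by simp
  qed
  then have "\<Theta> $$ (i, j) \<in> of_nat ` {..<p}" if "i < n" "j < n" for i j
    using that by (simp add: power_char_eq_self_imp_of_nat[OF assms(1,2)])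
  then have "\<Theta> $$ (i, j) \<in> K" if "i < n" "j < n" for i j
    using that of_nat_in_subfield[OF assms(3)] by fastforce
  then have "{\<Theta> $$ (i, j) | i j. i < n \<and> j < n} \<subseteq> K"
    by auto
  then have "L = K"
    unfolding assms(6) by (rule gen_field_eq[OF assms(3)])
  then have "card (Gal L K) = 1"
    by (simp add: Gal_self)
  with assms(1,7) show False
    by simp
qed

theorem lemma13:
  fixes p n N R :: nat
    and K k L :: "'a::field set"
    and w :: "'a \<Rightarrow> rat"
    and t T tR :: 'a
    and coef :: "int \<Rightarrow> 'a \<Rightarrow> 'a"
    and A \<Theta> :: "'a mat"
    and \<iota> :: "'a \<Rightarrow> 'a"
    and AR \<Theta>R \<Delta>R DR SR :: "'a mat"
    and W :: "nat \<Rightarrow> 'a mat"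
  assumes p_prime: "prime p" and char_p: "CHAR('a) = p"
    \<comment> \<open>the ambient field 'a is an algebraic closure of K\<close>
    and alg_closed: "alg_closed_field TYPE('a)"
    and algebraic: "\<forall>x. algebraic_over K x"
    \<comment> \<open>K is a complete discrete valuation field, normalised valuation w restricted to K;
        w is the (unique) extension of v_K to the algebraic closure\<close>
    and K_field: "is_subfield K"
    and w_val: "is_valuation w"
    and w_int: "\<forall>x\<in>K. x \<noteq> 0 \<longrightarrow> w x \<in> \<int>"
    and K_complete: "complete_wrt w K"
    and t_in: "t \<in> K" and t_nz: "t \<noteq> 0" and w_t: "w t = -1"
    \<comment> \<open>algebraically closed residue field k, embedded as coefficient field\<close>
    and k_sub: "k \<subseteq> K" and k_closed: "alg_closed_subfield k"
    and k_units: "\<forall>c\<in>k. c \<noteq> 0 \<longrightarrow> w c = 0"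
    \<comment> \<open>expansions x = sum_l x_l t^(-l), coef l x = x_l\<close>
    and coef_in: "\<forall>x\<in>K. \<forall>l. coef l x \<in> k"
    and coef_low: "\<forall>x\<in>K. \<exists>L0. \<forall>l<L0. coef l x = 0"
    and coef_exp: "\<forall>x\<in>K. \<forall>L0 M. (\<forall>l<L0. coef l x = 0) \<longrightarrow>
                     val_ge w (x - (\<Sum>l\<in>{L0..<M}. coef l x * t powi (-l))) (of_int M)"
    \<comment> \<open>L/K totally wildly ramified finite Galois with group UT_n(F_p)\<close>
    and n_ge: "n \<ge> 2"
    and L_gal: "finite_galois L K"
    and Gal_iso: "\<exists>\<phi>. bij_betw \<phi> (Gal L K) (UTp n p) \<and>
                   (\<forall>\<sigma>\<in>Gal L K. \<forall>\<tau>\<in>Gal L K. \<phi> (\<sigma> \<circ> \<tau>) = mult_mod p (\<phi> \<sigma>) (\<phi> \<tau>))"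
    and tot_ram: "\<exists>\<pi>\<in>L. \<pi> \<noteq> 0 \<and> w \<pi> = 1 / of_nat (card (Gal L K))"
    and wild: "p dvd card (Gal L K)"
    \<comment> \<open>the matrix A and the solution \<Theta>\<close>
    and A_UT: "A \<in> UT n K"
    and A_coef: "\<forall>i j l. i < j \<longrightarrow> j < n \<longrightarrow> (int p dvd l \<or> l \<ge> 0) \<longrightarrow> coef l (A $$ (i,j)) = 0"
    and Theta_UT: "\<Theta> \<in> UT n L"
    and Theta_eq: "frob_mat p \<Theta> * A = \<Theta>"
    and Theta_gen: "L = gen_field (K \<union> {\<Theta> $$ (i,j) | i j. i < n \<and> j < n})"
    \<comment> \<open>choice of N (q = p^N), with m_A = - v_K(A)\<close>
    and N_big: "real N > log (real p) (real n * (real p ^ (n * (n - 1) div 2) + 1)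
                   * real_of_rat (- val_mat w n A) + real p) + real (n * (n - 1) div 2)"
    \<comment> \<open>R, K_R = K(T), t_R\<close>
    and R_pos: "R > 0" and R_coprime: "coprime R p"
    and T_eq: "T ^ (p ^ N) + T ^ (p ^ N - 1) = t ^ R"
    and tR_eq: "tR ^ (p ^ N * R) = t ^ R * inverse (1 + inverse T)"
    and tR_cong: "\<forall>s. s ^ (p ^ N) = t \<longrightarrow> val_gt w (tR - s) (w s)"
    \<comment> \<open>\<iota>_R: K_sep \<rightarrow> K_sep ring isomorphism extending sum x_l t^(-l) \<mapsto> sum x_l^(1/q) t_R^(-l)\<close>
    and iota_bij: "bij_betw \<iota> (sep_closure K) (sep_closure K)"
    and iota_hom: "\<forall>x\<in>sep_closure K. \<forall>y\<in>sep_closure K.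
                     \<iota> (x + y) = \<iota> x + \<iota> y \<and> \<iota> (x * y) = \<iota> x * \<iota> y"
    and iota_one: "\<iota> 1 = 1"
    and iota_K: "\<forall>x\<in>K. \<forall>L0 M. (\<forall>l<L0. coef l x = 0) \<longrightarrow>
                   val_ge w (\<iota> x - (\<Sum>l\<in>{L0..<M}. root_q (p ^ N) (coef l x) * tR powi (-l)))
                     (of_int M / of_nat (p ^ N))"
  defines "AR \<equiv> map_mat \<iota> A"
    and "\<Theta>R \<equiv> map_mat \<iota> \<Theta>"
    and "W \<equiv> Wmat n p AR"
    and "\<Delta>R \<equiv> \<Theta>R - \<Theta> * W N"
    and "DR \<equiv> Pmat p \<Delta>R"
    and "SR \<equiv> inv_mat n (frob_mat p (W N)) * A * frob_mat p (W (N - 1)) - 1\<^sub>m n"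
  shows "DR - SR = frob_mat p \<Delta>R * (1\<^sub>m n - (SR + 1\<^sub>m n) * AR)
                   + frob_mat p (\<Theta>R - 1\<^sub>m n) * SR * AR + SR * (AR - 1\<^sub>m n)"
proof -
  have L: "is_subfield L" "K \<subseteq> L"
    and hom_L: "\<forall>x\<in>L. \<forall>y\<in>L. \<iota> (x + y) = \<iota> x + \<iota> y \<and> \<iota> (x * y) = \<iota> x * \<iota> y"
    using L_gal iota_hom unfolding finite_galois_def by blast+
  have A: "A \<in> carrier_mat n n" "elements_mat A \<subseteq> L"
    and \<Theta>: "\<Theta> \<in> carrier_mat n n" "elements_mat \<Theta> \<subseteq> L"
    using A_UT Theta_UT L(2) by (auto simp: UT_def dest!: elements_matD)
  have "A \<noteq> 1\<^sub>m n"
    using p_prime char_p K_field \<Theta>(1) Theta_eq Theta_gen wild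
    by (rule nontrivial_extension_matrix_ne_one)
  with A_UT have "val_mat w n A \<le> 0"
    using k_units coef_in A_coef
    by (intro val_mat_nonpos_of_polar_entries[OF w_val t_nz w_t _ coef_low coef_exp]) auto
  then have "1 \<le> log (real p) (real n * (real p ^ (n * (n - 1) div 2) + 1)
      * real_of_rat (- val_mat w n A) + real p)"
    using prime_gt_1_nat[OF p_prime] by (intro one_le_log_add_base) (auto simp: zero_le_of_rat_iff)
  then have "1 \<le> N"
    using N_big by linarith
  have AR: "AR \<in> UT n UNIV"
    unfolding AR_def using A_UT L(2)
    by (intro map_mat_UT[OF L(1) hom_L iota_one]) (auto simp: UT_def)
  have "frob_mat p \<Theta>R * AR = \<Theta>R"
    unfolding \<Theta>R_def AR_def using A \<Theta>
    by (intro map_mat_frobenius_equation[OF L(1) hom_L iota_one Theta_eq]) auto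
  moreover have "frob_mat p (W (N - 1)) * AR = W N"
    using frob_mat_Wmat[OF p_prime char_p UTD(1)[OF AR], of "N - 1"] \<open>1 \<le> N\<close>
    by (simp add: W_def)
  ultimately show ?thesis
    unfolding DR_def SR_def \<Delta>R_def W_def
    using UTD(1)[OF AR] A(1) \<Theta>(1) Wmat_carrier[OF UTD(1)[OF AR]]
      det_frob_mat_Wmat[OF p_prime char_p AR]
    by (intro frobenius_defect_identity[OF p_prime char_p _ _ _ _ _ _ _ _ Theta_eq])
      (auto simp: \<Theta>R_def)
qed

end
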